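(* In the standing setting, let $(A,B,R,\sigma)$ be a normalized context and $(g,f)\in\mathcal{FC}$. If $g^{\uparrow}\ne f_\bot$, then there is no concept $\langle g_0,f_0\rangle\in\mathcal M$ with $\langle g,g^{\uparrow}\rangle\prec\langle g_0,f_0\rangle\prec\langle g_\top,f_\bot\rangle$. Dually, if $f^{\downarrow}\ne g_\bot$, then there is no concept $\langle g_0,f_0\rangle\in\mathcal M$ with $\langle g_\bot,f_\top\rangle\prec\langle g_0,f_0\rangle\prec\langle f^{\downarrow},f\rangle$. (Here $\prec$ denotes the strict order of $\mathcal M$.)
   Context: Adjoint triple: for posets $(P_1,\le_1),(P_2,\le_2),(P_3,\le_3)$, maps $\&\colon P_1\times P_2\to P_3$, $\swarrow\colon P_3\times P_2\to P_1$, $\nwarrow\colon P_3\times P_1\to P_2$ with $x\le_1 z\swarrow y \iff x\,\&\,y\le_3 z \iff y\le_2 z\nwarrow x$ for all $x,y,z$. For lower-bounded posets, $\&$ has zero-divisors if there are $x\ne\bot_1$, $y\neq\bot_2$ with $x\,\&\,y=\bot_3$. Standing setting: $(L_1,\preceq_1,\bot_1,\top_1)$ and $(L_2,\preceq_2,\bot_2,\top_2)$ are complete lattices and $(P,\le,\bot,\top)$ is a bounded poset. A multi-adjoint frame consists of adjoint triples $(\&_i,\swarrow^i,\nwarrow_i)$, $i=1,\dots,n$, with respect to $L_1,L_2,P$; a property-oriented frame consists of adjoint triples $(\&^p_j,\swarrow_p^j,\nwarrow^p_j)$, $j=1,\dots,m$, with respect to $P,L_2,L_1$; an object-oriented frame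 consists of adjoint triples $(\&^o_k,\swarrow_o^k,\nwarrow^o_k)$, $k=1,\dots,s$, with respect to $L_1,P,L_2$. All conjunctors $\&_i,\&^p_j,\&^o_k$ have no zero-divisors. A context $(A,B,R,\sigma)$ consists of non-empty sets $A,B$, $R\colon A\times B\to P$, and maps $\sigma,\sigma_p,\sigma_o$ from $A\times B$ to the index sets of the three frames. It is normalized if every $a\in A$ has $b_1,b_2\in B$ with $R(a,b_1)\ne\bot$, $R(a,b_2)=\bot$, and every $b\in B$ has $a_1,a_2\in A$ with $R(a_1,b)\neq\bot$, $R(a_2,b)=\bot$. Concept-forming operators: $g^{\uparrow}(a)=\inf\{R(a,b)\swarrow^{\sigma(a,b)}g(b)\mid b\in B\}$ for $g\in L_2^B$ and $f^{\downarrow}(b)=\inf\{R(a,b)\nwarrow_{\sigma(a,b)}f(a)\mid a\in A\}$ for $f\in L_1^A$. Multi-adjoint concept lattice $\mathcal M=\{\langle g,f\rangle\mid g\in L_2^B,f\in L_1^A,\ g^{\uparrow}=f,\ f^{\downarrow}=g\}$, ordered by $\langle g_1,f_1\rangle\preceq\langle g_2,f_2\rangle$ iff $g_1\preceq_2 g_2$ pointwise. Fuzzy necessity operators: $g^{\uparrow_N}(a)=\inf\{g(b)\swarrow_o^{\sigma_o(a,b)}R(a,b)\mid b\in B\}$ and $f^{\downarrow^N}(b)=\inf\{f(a)\nwarrow^p_{\sigma_p(a,b)}R(a,b)\mid a\in A\}$. $\mathcal F_N=\{(g,f)\mid g\in L_2^B,\ f\in L_1^A,\ g^{\uparrow_N}=f,\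 f^{\downarrow^N}=g\}$. For $X\subseteq B$, $\chi_X\in L_2^B$ takes value $\top_2$ on $X$ and $\bot_2$ elsewhere; for $Y\subseteq A$, $\chi_Y\in L_1^A$ takes value $\top_1$ on $Y$ and $\bot_1$ elsewhere. $\mathcal{FC}=\{(\chi_X,\chi_Y)\in\mathcal F_N\mid \varnothing\ne X\subsetneq B,\ \varnothing\neq Y\subsetneq A\}$. $g_\top,g_\bot\in L_2^B$ are the constant maps with values $\top_2,\bot_2$; $f_\top,f_\bot\in L_1^A$ are the constant maps with values $\top_1,\bot_1$. *)

theory Defs
  imports Main
begin

definition adjoint_triple ::
  "('a::order \<Rightarrow> 'b::order \<Rightarrow> 'c::order) \<Rightarrow> ('c \<Rightarrow> 'b \<Rightarrow> 'a) \<Rightarrow> ('c \<Rightarrow> 'a \<Rightarrow> 'b) \<Rightarrow> bool" where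
  "adjoint_triple cj sw nw \<longleftrightarrow>
     (\<forall>x y z. (x \<le> sw z y \<longleftrightarrow> cj x y \<le> z) \<and> (cj x y \<le> z \<longleftrightarrow> y \<le> nw z x))"

definition no_zero_divisors ::
  "('a::order_bot \<Rightarrow> 'b::order_bot \<Rightarrow> 'c::order_bot) \<Rightarrow> bool" where
  "no_zero_divisors cj \<longleftrightarrow> \<not> (\<exists>x y. x \<noteq> bot \<and> y \<noteq> bot \<and> cj x y = bot)"

definition adj_frame ::
  "nat \<Rightarrow> (nat \<Rightarrow> 'a::order_bot \<Rightarrow> 'b::order_bot \<Rightarrow> 'c::order_bot) \<Rightarrow> (nat \<Rightarrow> 'c \<Rightarrow> 'b \<Rightarrow> 'a)
     \<Rightarrow> (nat \<Rightarrow> 'c \<Rightarrow> 'a \<Rightarrow> 'b) \<Rightarrow> bool" where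
  "adj_frame n cj sw nw \<longleftrightarrow>
     (\<forall>i\<in>{1..n}. adjoint_triple (cj i) (sw i) (nw i) \<and> no_zero_divisors (cj i))"

text \<open>Normalized context; objects A and attributes B are the (non-empty) types 'o and 'at.\<close>
definition normalized :: "('o \<Rightarrow> 'at \<Rightarrow> 'p::bot) \<Rightarrow> bool" where
  "normalized R \<longleftrightarrow>
     (\<forall>a. (\<exists>b1. R a b1 \<noteq> bot) \<and> (\<exists>b2. R a b2 = bot)) \<and>
     (\<forall>b. (\<exists>a1. R a1 b \<noteq> bot) \<and> (\<exists>a2. R a2 b = bot))"

definition up_op ::
  "(nat \<Rightarrow> 'p \<Rightarrow> 'l2 \<Rightarrow> 'l1::complete_lattice) \<Rightarrow> ('o \<Rightarrow> 'at \<Rightarrow> nat) \<Rightarrow> ('o \<Rightarrow> 'at \<Rightarrow> 'p)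
     \<Rightarrow> ('at \<Rightarrow> 'l2) \<Rightarrow> ('o \<Rightarrow> 'l1)" where
  "up_op sw \<sigma> R g = (\<lambda>a. Inf {sw (\<sigma> a b) (R a b) (g b) | b. True})"

definition down_op ::
  "(nat \<Rightarrow> 'p \<Rightarrow> 'l1 \<Rightarrow> 'l2::complete_lattice) \<Rightarrow> ('o \<Rightarrow> 'at \<Rightarrow> nat) \<Rightarrow> ('o \<Rightarrow> 'at \<Rightarrow> 'p)
     \<Rightarrow> ('o \<Rightarrow> 'l1) \<Rightarrow> ('at \<Rightarrow> 'l2)" where
  "down_op nw \<sigma> R f = (\<lambda>b. Inf {nw (\<sigma> a b) (R a b) (f a) | a. True})"

definition concept_lattice ::
  "(nat \<Rightarrow> 'p \<Rightarrow> 'l2 \<Rightarrow> 'l1::complete_lattice) \<Rightarrow> (nat \<Rightarrow> 'p \<Rightarrow> 'l1 \<Rightarrow> 'l2::complete_lattice)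
     \<Rightarrow> ('o \<Rightarrow> 'at \<Rightarrow> nat) \<Rightarrow> ('o \<Rightarrow> 'at \<Rightarrow> 'p) \<Rightarrow> (('at \<Rightarrow> 'l2) \<times> ('o \<Rightarrow> 'l1)) set" where
  "concept_lattice sw nw \<sigma> R =
     {(g, f). up_op sw \<sigma> R g = f \<and> down_op nw \<sigma> R f = g}"

definition concept_le :: "('at \<Rightarrow> 'l2::order) \<times> 'x \<Rightarrow> ('at \<Rightarrow> 'l2) \<times> 'x \<Rightarrow> bool" where
  "concept_le p q \<longleftrightarrow> fst p \<le> fst q"

definition concept_less :: "('at \<Rightarrow> 'l2::order) \<times> 'x \<Rightarrow> ('at \<Rightarrow> 'l2) \<times> 'x \<Rightarrow> bool" where
  "concept_less p q \<longleftrightarrow> concept_le p q \<and> p \<noteq> q"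

definition upN_op ::
  "(nat \<Rightarrow> 'l2 \<Rightarrow> 'p \<Rightarrow> 'l1::complete_lattice) \<Rightarrow> ('o \<Rightarrow> 'at \<Rightarrow> nat) \<Rightarrow> ('o \<Rightarrow> 'at \<Rightarrow> 'p)
     \<Rightarrow> ('at \<Rightarrow> 'l2) \<Rightarrow> ('o \<Rightarrow> 'l1)" where
  "upN_op swo \<sigma>o R g = (\<lambda>a. Inf {swo (\<sigma>o a b) (g b) (R a b) | b. True})"

definition downN_op ::
  "(nat \<Rightarrow> 'l1 \<Rightarrow> 'p \<Rightarrow> 'l2::complete_lattice) \<Rightarrow> ('o \<Rightarrow> 'at \<Rightarrow> nat) \<Rightarrow> ('o \<Rightarrow> 'at \<Rightarrow> 'p)
     \<Rightarrow> ('o \<Rightarrow> 'l1) \<Rightarrow> ('at \<Rightarrow> 'l2)" where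
  "downN_op nwp \<sigma>p R f = (\<lambda>b. Inf {nwp (\<sigma>p a b) (f a) (R a b) | a. True})"

definition FN_set ::
  "(nat \<Rightarrow> 'l2 \<Rightarrow> 'p \<Rightarrow> 'l1::complete_lattice) \<Rightarrow> (nat \<Rightarrow> 'l1 \<Rightarrow> 'p \<Rightarrow> 'l2::complete_lattice)
     \<Rightarrow> ('o \<Rightarrow> 'at \<Rightarrow> nat) \<Rightarrow> ('o \<Rightarrow> 'at \<Rightarrow> nat) \<Rightarrow> ('o \<Rightarrow> 'at \<Rightarrow> 'p)
     \<Rightarrow> (('at \<Rightarrow> 'l2) \<times> ('o \<Rightarrow> 'l1)) set" where
  "FN_set swo nwp \<sigma>o \<sigma>p R =
     {(g, f). upN_op swo \<sigma>o R g = f \<and> downN_op nwp \<sigma>p R f = g}"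

definition chi :: "'x set \<Rightarrow> 'x \<Rightarrow> 'l::{bot,top}" where
  "chi X = (\<lambda>x. if x \<in> X then top else bot)"

definition FC_set ::
  "(nat \<Rightarrow> 'l2 \<Rightarrow> 'p \<Rightarrow> 'l1::complete_lattice) \<Rightarrow> (nat \<Rightarrow> 'l1 \<Rightarrow> 'p \<Rightarrow> 'l2::complete_lattice)
     \<Rightarrow> ('o \<Rightarrow> 'at \<Rightarrow> nat) \<Rightarrow> ('o \<Rightarrow> 'at \<Rightarrow> nat) \<Rightarrow> ('o \<Rightarrow> 'at \<Rightarrow> 'p)
     \<Rightarrow> (('at \<Rightarrow> 'l2) \<times> ('o \<Rightarrow> 'l1)) set" where
  "FC_set swo nwp \<sigma>o \<sigma>p R =
     {(chi X, chi Y) | X Y. (chi X, chi Y) \<in> FN_set swo nwp \<sigma>o \<sigma>p R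
        \<and> X \<noteq> {} \<and> X \<noteq> UNIV \<and> Y \<noteq> {} \<and> Y \<noteq> UNIV}"

end

theory Submission
  imports Defs
begin

(* If (g, f) is a fixed pair of the necessity operators and R(a, b) is not bottom, the absence
   of zero-divisors forces f(a) = bot <-> g(b) = bot.  So for a crisp pair (chi X, chi Y) an
   attribute outside X and one inside X are never related to a common object.  A concept
   (g0, f0) strictly above (chi X, -) is non-bottom on two such attributes, hence every object a
   has an attribute b with R(a, b) = bot and g0(b) <> bot; then sw(bot, g0 b) = bot gives
   f0 = bot, and g0 = down f0 = top. *)

lemma adjoint_triple_sw_iff_nw:
  "adjoint_triple cj sw nw \<Longrightarrow> x \<le> sw z y \<longleftrightarrow> y \<le> nw z x"
  unfolding adjoint_triple_def by blast

lemma adjoint_triple_sw_bot: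
  assumes "adjoint_triple cj sw nw" "no_zero_divisors cj" "y \<noteq> bot"
  shows "sw bot y = bot"
proof -
  have "cj (sw bot y) y \<le> bot" using assms(1) unfolding adjoint_triple_def by blast
  then show ?thesis using assms(2,3) bot_unique unfolding no_zero_divisors_def by blast
qed

lemma adjoint_triple_nw_bot:
  assumes "adjoint_triple cj sw nw" "no_zero_divisors cj" "x \<noteq> bot"
  shows "nw bot x = bot"
proof -
  have "cj x (nw bot x) \<le> bot" using assms(1) unfolding adjoint_triple_def by blast
  then show ?thesis using assms(2,3) bot_unique unfolding no_zero_divisors_def by blast
qed

lemma adjoint_triple_sw_top:
  fixes cj :: "'a::{order_bot,order_top} \<Rightarrow> 'b::order_bot \<Rightarrow> 'c::order_bot"
  assumes "adjoint_triple cj sw nw"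
  shows "sw z bot = top"
  using assms top_unique unfolding adjoint_triple_def by (metis bot.extremum)

lemma adjoint_triple_nw_top:
  fixes cj :: "'a::order_bot \<Rightarrow> 'b::{order_bot,order_top} \<Rightarrow> 'c::order_bot"
  assumes "adjoint_triple cj sw nw"
  shows "nw z bot = top"
  using assms top_unique unfolding adjoint_triple_def by (metis bot.extremum)

lemma up_op_le: "up_op sw \<sigma> R g a \<le> sw (\<sigma> a b) (R a b) (g b)"
  unfolding up_op_def by (rule Inf_lower) blast

lemma down_op_le: "down_op nw \<sigma> R f b \<le> nw (\<sigma> a b) (R a b) (f a)"
  unfolding down_op_def by (rule Inf_lower) blast

lemma upN_op_le: "upN_op swo \<sigma>o R g a \<le> swo (\<sigma>o a b) (g b) (R a b)"
  unfolding upN_op_def by (rule Inf_lower) blast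

lemma downN_op_le: "downN_op nwp \<sigma>p R f b \<le> nwp (\<sigma>p a b) (f a) (R a b)"
  unfolding downN_op_def by (rule Inf_lower) blast

lemma le_up_op_iff_le_down_op:
  assumes "\<And>a b. adjoint_triple (cj (\<sigma> a b)) (sw (\<sigma> a b)) (nw (\<sigma> a b))"
  shows "f \<le> up_op sw \<sigma> R g \<longleftrightarrow> g \<le> down_op nw \<sigma> R f"
proof -
  have "f \<le> up_op sw \<sigma> R g \<longleftrightarrow> (\<forall>a b. f a \<le> sw (\<sigma> a b) (R a b) (g b))"
    unfolding le_fun_def up_op_def le_Inf_iff by blast
  also have "\<dots> \<longleftrightarrow> (\<forall>a b. g b \<le> nw (\<sigma> a b) (R a b) (f a))"
    using adjoint_triple_sw_iff_nw[OF assms] by blast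
  also have "\<dots> \<longleftrightarrow> g \<le> down_op nw \<sigma> R f"
    unfolding le_fun_def down_op_def le_Inf_iff by blast
  finally show ?thesis .
qed

lemma up_op_eq_bot:
  assumes "\<And>a b. adjoint_triple (cj (\<sigma> a b)) (sw (\<sigma> a b)) (nw (\<sigma> a b))"
    and "\<And>a b. no_zero_divisors (cj (\<sigma> a b))"
    and "\<And>a. \<exists>b. R a b = bot \<and> g b \<noteq> bot"
  shows "up_op sw \<sigma> R g = (\<lambda>_. bot)"
proof
  fix a
  obtain b where "R a b = bot" "g b \<noteq> bot" using assms(3) by blast
  then have "sw (\<sigma> a b) (R a b) (g b) = bot" using adjoint_triple_sw_bot assms(1,2) by metis
  then show "up_op sw \<sigma> R g a = bot" using up_op_le bot_unique by metis
qed

lemma down_op_eq_bot: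
  assumes "\<And>a b. adjoint_triple (cj (\<sigma> a b)) (sw (\<sigma> a b)) (nw (\<sigma> a b))"
    and "\<And>a b. no_zero_divisors (cj (\<sigma> a b))"
    and "\<And>b. \<exists>a. R a b = bot \<and> f a \<noteq> bot"
  shows "down_op nw \<sigma> R f = (\<lambda>_. bot)"
proof
  fix b
  obtain a where "R a b = bot" "f a \<noteq> bot" using assms(3) by blast
  then have "nw (\<sigma> a b) (R a b) (f a) = bot" using adjoint_triple_nw_bot assms(1,2) by metis
  then show "down_op nw \<sigma> R f b = bot" using down_op_le bot_unique by metis
qed

lemma up_op_bot:
  fixes sw :: "nat \<Rightarrow> 'p::order_bot \<Rightarrow> 'l2::complete_lattice \<Rightarrow> 'l1::complete_lattice"
  assumes "\<And>a b. adjoint_triple (cj (\<sigma> a b)) (sw (\<sigma> a b)) (nw (\<sigma> a b))"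
  shows "up_op sw \<sigma> R (\<lambda>_. bot) = (\<lambda>_. top)"
  unfolding up_op_def using adjoint_triple_sw_top[OF assms] by (auto intro!: Inf_top_conv(2)[THEN iffD2])

lemma down_op_bot:
  fixes nw :: "nat \<Rightarrow> 'p::order_bot \<Rightarrow> 'l1::complete_lattice \<Rightarrow> 'l2::complete_lattice"
  assumes "\<And>a b. adjoint_triple (cj (\<sigma> a b)) (sw (\<sigma> a b)) (nw (\<sigma> a b))"
  shows "down_op nw \<sigma> R (\<lambda>_. bot) = (\<lambda>_. top)"
  unfolding down_op_def using adjoint_triple_nw_top[OF assms] by (auto intro!: Inf_top_conv(2)[THEN iffD2])

lemma chi_strictly_below:
  fixes h :: "'x \<Rightarrow> 'l::{order_bot,order_top}"
  assumes "chi X \<le> h" "chi X \<noteq> h" "X \<noteq> {}"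
  obtains x0 x1 where "chi X x0 = (bot :: 'l)" "h x0 \<noteq> bot" "chi X x1 \<noteq> (bot :: 'l)" "h x1 \<noteq> bot"
proof -
  obtain x0 where x0_neq: "chi X x0 \<noteq> h x0" using assms(2) by blast
  have le: "chi X x \<le> h x" for x using assms(1) by (simp add: le_fun_def)
  have "x0 \<notin> X"
  proof
    assume "x0 \<in> X"
    then have "h x0 = top" using le[of x0] by (simp add: chi_def top_unique)
    with \<open>x0 \<in> X\<close> x0_neq show False by (simp add: chi_def)
  qed
  then have x0: "chi X x0 = (bot :: 'l)" "h x0 \<noteq> bot" using x0_neq by (simp_all add: chi_def)
  then have "top \<noteq> (bot :: 'l)" using bot_unique top_greatest by metis
  obtain x1 where "x1 \<in> X" using assms(3) by blast
  then have "chi X x1 \<noteq> (bot :: 'l)" "h x1 \<noteq> bot"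
    using le[of x1] \<open>top \<noteq> bot\<close> by (simp_all add: chi_def top_unique)
  with x0 that show ?thesis by blast
qed

lemma FN_set_bot_iff:
  assumes "\<And>a b. adjoint_triple (cjo (\<sigma>o a b)) (swo (\<sigma>o a b)) (nwo (\<sigma>o a b))"
    and "\<And>a b. no_zero_divisors (cjo (\<sigma>o a b))"
    and "\<And>a b. adjoint_triple (cjp (\<sigma>p a b)) (swp (\<sigma>p a b)) (nwp (\<sigma>p a b))"
    and "\<And>a b. no_zero_divisors (cjp (\<sigma>p a b))"
    and "(g, f) \<in> FN_set swo nwp \<sigma>o \<sigma>p R" "R a b \<noteq> bot"
  shows "f a = bot \<longleftrightarrow> g b = bot"
proof
  assume "f a = bot"
  then have "g b \<le> nwp (\<sigma>p a b) bot (R a b)"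
    using downN_op_le[of nwp \<sigma>p R f b a] assms(5) unfolding FN_set_def by simp
  then show "g b = bot" using adjoint_triple_nw_bot assms(3,4,6) bot_unique by metis
next
  assume "g b = bot"
  then have "f a \<le> swo (\<sigma>o a b) bot (R a b)"
    using upN_op_le[of swo \<sigma>o R g a b] assms(5) unfolding FN_set_def by simp
  then show "f a = bot" using adjoint_triple_sw_bot assms(1,2,6) bot_unique by metis
qed

lemma concept_above_crisp_FN_eq_top:
  fixes g0 :: "'at \<Rightarrow> 'l2::complete_lattice"
    and swo :: "nat \<Rightarrow> 'l2 \<Rightarrow> 'p::order_bot \<Rightarrow> 'l1::complete_lattice"
  assumes "\<And>a b. adjoint_triple (cj (\<sigma> a b)) (sw (\<sigma> a b)) (nw (\<sigma> a b))"
    and "\<And>a b. no_zero_divisors (cj (\<sigma> a b))"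
    and "\<And>a b. adjoint_triple (cjo (\<sigma>o a b)) (swo (\<sigma>o a b)) (nwo (\<sigma>o a b))"
    and "\<And>a b. no_zero_divisors (cjo (\<sigma>o a b))"
    and "\<And>a b. adjoint_triple (cjp (\<sigma>p a b)) (swp (\<sigma>p a b)) (nwp (\<sigma>p a b))"
    and "\<And>a b. no_zero_divisors (cjp (\<sigma>p a b))"
    and FN: "(chi X, f) \<in> FN_set swo nwp \<sigma>o \<sigma>p R" and "X \<noteq> {}"
    and concept: "(g0, f0) \<in> concept_lattice sw nw \<sigma> R"
    and "chi X \<le> g0" "chi X \<noteq> g0"
  shows "(g0, f0) = (\<lambda>_. top, \<lambda>_. bot)"
proof -
  obtain b0 b1 where b0: "chi X b0 = (bot :: 'l2)" "g0 b0 \<noteq> bot"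
    and b1: "chi X b1 \<noteq> (bot :: 'l2)" "g0 b1 \<noteq> bot"
    using chi_strictly_below[OF \<open>chi X \<le> g0\<close> \<open>chi X \<noteq> g0\<close> \<open>X \<noteq> {}\<close>] .
  have "\<exists>b. R a b = bot \<and> g0 b \<noteq> bot" for a
  proof -
    have "R a b0 = bot \<or> R a b1 = bot"
      using FN_set_bot_iff[OF assms(3-6) FN] b0(1) b1(1) by metis
    then show ?thesis using b0(2) b1(2) by blast
  qed
  then have "f0 = (\<lambda>_. bot)"
    using concept up_op_eq_bot[where cj = cj and \<sigma> = \<sigma>, OF assms(1,2)]
    unfolding concept_lattice_def by auto
  moreover from this have "g0 = (\<lambda>_. top)"
    using concept down_op_bot[where cj = cj and \<sigma> = \<sigma>, OF assms(1)] unfolding concept_lattice_def by auto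
  ultimately show ?thesis by simp
qed

lemma concept_below_crisp_FN_eq_bot:
  fixes f0 :: "'o \<Rightarrow> 'l1::complete_lattice"
    and nwp :: "nat \<Rightarrow> 'l1 \<Rightarrow> 'p::order_bot \<Rightarrow> 'l2::complete_lattice"
  assumes "\<And>a b. adjoint_triple (cj (\<sigma> a b)) (sw (\<sigma> a b)) (nw (\<sigma> a b))"
    and "\<And>a b. no_zero_divisors (cj (\<sigma> a b))"
    and "\<And>a b. adjoint_triple (cjo (\<sigma>o a b)) (swo (\<sigma>o a b)) (nwo (\<sigma>o a b))"
    and "\<And>a b. no_zero_divisors (cjo (\<sigma>o a b))"
    and "\<And>a b. adjoint_triple (cjp (\<sigma>p a b)) (swp (\<sigma>p a b)) (nwp (\<sigma>p a b))"
    and "\<And>a b. no_zero_divisors (cjp (\<sigma>p a b))"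
    and FN: "(g, chi Y) \<in> FN_set swo nwp \<sigma>o \<sigma>p R" and "Y \<noteq> {}"
    and concept: "(g0, f0) \<in> concept_lattice sw nw \<sigma> R"
    and "chi Y \<le> f0" "chi Y \<noteq> f0"
  shows "(g0, f0) = (\<lambda>_. bot, \<lambda>_. top)"
proof -
  obtain a0 a1 where a0: "chi Y a0 = (bot :: 'l1)" "f0 a0 \<noteq> bot"
    and a1: "chi Y a1 \<noteq> (bot :: 'l1)" "f0 a1 \<noteq> bot"
    using chi_strictly_below[OF \<open>chi Y \<le> f0\<close> \<open>chi Y \<noteq> f0\<close> \<open>Y \<noteq> {}\<close>] .
  have "\<exists>a. R a b = bot \<and> f0 a \<noteq> bot" for b
  proof -
    have "R a0 b = bot \<or> R a1 b = bot"
      using FN_set_bot_iff[OF assms(3-6) FN] a0(1) a1(1) by metis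
    then show ?thesis using a0(2) a1(2) by blast
  qed
  then have "g0 = (\<lambda>_. bot)"
    using concept down_op_eq_bot[where cj = cj and \<sigma> = \<sigma>, OF assms(1,2)]
    unfolding concept_lattice_def by auto
  moreover from this have "f0 = (\<lambda>_. top)"
    using concept up_op_bot[where cj = cj and \<sigma> = \<sigma>, OF assms(1)] unfolding concept_lattice_def by auto
  ultimately show ?thesis by simp
qed

theorem mainTheorem14:
  fixes cj :: "nat \<Rightarrow> 'l1::complete_lattice \<Rightarrow> 'l2::complete_lattice \<Rightarrow> 'p::{order_bot,order_top}"
    and sw :: "nat \<Rightarrow> 'p \<Rightarrow> 'l2 \<Rightarrow> 'l1" and nw :: "nat \<Rightarrow> 'p \<Rightarrow> 'l1 \<Rightarrow> 'l2"
    and cjp :: "nat \<Rightarrow> 'p \<Rightarrow> 'l2 \<Rightarrow> 'l1" and swp :: "nat \<Rightarrow> 'l1 \<Rightarrow> 'l2 \<Rightarrow> 'p"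
    and nwp :: "nat \<Rightarrow> 'l1 \<Rightarrow> 'p \<Rightarrow> 'l2"
    and cjo :: "nat \<Rightarrow> 'l1 \<Rightarrow> 'p \<Rightarrow> 'l2" and swo :: "nat \<Rightarrow> 'l2 \<Rightarrow> 'p \<Rightarrow> 'l1"
    and nwo :: "nat \<Rightarrow> 'l2 \<Rightarrow> 'l1 \<Rightarrow> 'p"
    and n m s :: nat
    and R :: "'o \<Rightarrow> 'at \<Rightarrow> 'p"
    and \<sigma> \<sigma>p \<sigma>o :: "'o \<Rightarrow> 'at \<Rightarrow> nat"
    and g :: "'at \<Rightarrow> 'l2" and f :: "'o \<Rightarrow> 'l1"
  assumes frame: "adj_frame n cj sw nw"
    and pframe: "adj_frame m cjp swp nwp"
    and oframe: "adj_frame s cjo swo nwo"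
    and sigma: "\<forall>a b. \<sigma> a b \<in> {1..n}"
    and sigmap: "\<forall>a b. \<sigma>p a b \<in> {1..m}"
    and sigmao: "\<forall>a b. \<sigma>o a b \<in> {1..s}"
    and norm: "normalized R"
    and FC: "(g, f) \<in> FC_set swo nwp \<sigma>o \<sigma>p R"
  shows "(up_op sw \<sigma> R g \<noteq> (\<lambda>_. bot) \<longrightarrow>
           \<not> (\<exists>g0 f0. (g0, f0) \<in> concept_lattice sw nw \<sigma> R \<and>
                concept_less (g, up_op sw \<sigma> R g) (g0, f0) \<and>
                concept_less (g0, f0) ((\<lambda>_. top), (\<lambda>_. bot))))
       \<and> (down_op nw \<sigma> R f \<noteq> (\<lambda>_. bot) \<longrightarrow>
           \<not> (\<exists>g0 f0. (g0, f0) \<in> concept_lattice sw nw \<sigma> R \<and>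
                concept_less ((\<lambda>_. bot), (\<lambda>_. top)) (g0, f0) \<and>
                concept_less (g0, f0) (down_op nw \<sigma> R f, f)))"
proof -
  have triples:
    "\<And>a b. adjoint_triple (cj (\<sigma> a b)) (sw (\<sigma> a b)) (nw (\<sigma> a b))"
    "\<And>a b. no_zero_divisors (cj (\<sigma> a b))"
    "\<And>a b. adjoint_triple (cjo (\<sigma>o a b)) (swo (\<sigma>o a b)) (nwo (\<sigma>o a b))"
    "\<And>a b. no_zero_divisors (cjo (\<sigma>o a b))"
    "\<And>a b. adjoint_triple (cjp (\<sigma>p a b)) (swp (\<sigma>p a b)) (nwp (\<sigma>p a b))"
    "\<And>a b. no_zero_divisors (cjp (\<sigma>p a b))"
    using frame sigma oframe sigmao pframe sigmap unfolding adj_frame_def by blast+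
  obtain X Y where g: "g = chi X" and f: "f = chi Y" and X: "X \<noteq> {}" and Y: "Y \<noteq> {}"
    and FN: "(g, f) \<in> FN_set swo nwp \<sigma>o \<sigma>p R"
    using FC unfolding FC_set_def by blast
  have "(g0, f0) = (\<lambda>_. top, \<lambda>_. bot)"
    if concept: "(g0, f0) \<in> concept_lattice sw nw \<sigma> R"
      and "concept_less (g, up_op sw \<sigma> R g) (g0, f0)" for g0 f0
  proof -
    have "g \<le> g0" "g \<noteq> g0"
      using that unfolding concept_lattice_def concept_less_def concept_le_def by auto
    then show ?thesis
      using concept_above_crisp_FN_eq_top[OF triples FN[unfolded g] X concept] g by simp
  qed
  moreover have "(g0, f0) = (\<lambda>_. bot, \<lambda>_. top)"
    if concept: "(g0, f0) \<in> concept_lattice sw nw \<sigma> R"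
      and "concept_less (g0, f0) (down_op nw \<sigma> R f, f)" for g0 f0
  proof -
    have "g0 \<le> down_op nw \<sigma> R f" "f0 \<noteq> f"
      using that unfolding concept_lattice_def concept_less_def concept_le_def by auto
    moreover have "f0 = up_op sw \<sigma> R g0" using concept unfolding concept_lattice_def by auto
    ultimately have "f \<le> f0" "f \<noteq> f0"
      using le_up_op_iff_le_down_op[where cj = cj and \<sigma> = \<sigma>, OF triples(1)] by auto
    then show ?thesis
      using concept_below_crisp_FN_eq_bot[OF triples FN[unfolded f] Y concept] f by simp
  qed
  ultimately show ?thesis unfolding concept_less_def by blast
qed

end
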